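(* If a finite semigroup $S$ is pseudo-nilpotent and its upper non-nilpotent graph $\mathcal{N}_S$ has no edges, then $S$ is nilpotent.
   Context: For a semigroup $S$, $S^1$ denotes $S$ with an identity adjoined (if $S$ has none). For $x,y\in S$ and $z_1,z_2,\ldots\in S^1$ define recursively $\lambda_0=x$, $\rho_0=y$, $\lambda_{n+1}=\lambda_n z_{n+1}\rho_n$, $\rho_{n+1}=\rho_n z_{n+1}\lambda_n$; write $\lambda_n(x,y,z_1,\ldots,z_n)$ and $\rho_n(x,y,z_1,\ldots,z_n)$. A semigroup $S$ is nilpotent (in the sense of Mal'cev) if there is a positive integer $n$ with $\lambda_n(a,b,c_1,\ldots,c_n)=\rho_n(a,b,c_1,\ldots,c_n)$ for all $a,b\in S$ and $c_1,\ldots,c_n\in S^1$. $\langle X\rangle$ denotes the subsemigroup generated by $X$. The upper non-nilpotent graph $\mathcal{N}_S$ has vertex set $S$, with an edge between $x$ and $y$ iff $\langle x,y\rangle$ is not nilpotent; "$\mathcal{N}_S$ is empty" means it has no edges. The empty set is regarded as an ideal; for an ideal $I$ of $S$, $S/I$ is the Rees factor semigroup, with $S/\emptyset=S$. A semigroup $S$ is pseudo-nilpotent if the following holds: whenever $x,y\in S$, $w_1,\ldots,w_m\in S^1$, $T$ is the subsemigroup generated by $x,y$ and those $w_i$ lying in $S$, $I$ is an ideal (possibly empty) of $T$, and $t<m$ are non-negative integers such that, writing $\lambda_k=\lambda_k(x,y,w_1,\ldots,w_k)$ and $\rho_k=\rho_k(x,y,w_1,\ldots,w_k)$, one has $\lambda_t\neq\rho_t$,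 $(\lambda_t,\rho_t)=(\lambda_m,\rho_m)$ and $\lambda_m,\rho_m\notin I$, then for every $0\le i\le m$ there is an edge in $\mathcal{N}_{T/I}$ between (the images of) $\lambda_i$ and $\rho_i$. *)

theory Defs
  imports Main
begin

text \<open>Semigroups are given by a carrier set and a binary operation.
  Elements of the adjoined-identity semigroup S^1 are encoded as options:
  Some z is z in S, None is the adjoined identity 1.\<close>

definition mult1 :: "('a \<Rightarrow> 'a \<Rightarrow> 'a) \<Rightarrow> 'a \<Rightarrow> 'a option \<Rightarrow> 'a \<Rightarrow> 'a" where
  "mult1 f a z b = (case z of None \<Rightarrow> f a b | Some c \<Rightarrow> f (f a c) b)"

definition one_ext :: "'a set \<Rightarrow> 'a option set" where
  "one_ext S = insert None (Some ` S)"

text \<open>lamrho f x y zs n = (lambda_n, rho_n) with z_k = zs k for 1 <= k <= n.\<close>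
fun lamrho :: "('a \<Rightarrow> 'a \<Rightarrow> 'a) \<Rightarrow> 'a \<Rightarrow> 'a \<Rightarrow> (nat \<Rightarrow> 'a option) \<Rightarrow> nat \<Rightarrow> 'a \<times> 'a" where
  "lamrho f x y zs 0 = (x, y)"
| "lamrho f x y zs (Suc n) =
     (let (l, r) = lamrho f x y zs n in (mult1 f l (zs (Suc n)) r, mult1 f r (zs (Suc n)) l))"

definition lam :: "('a \<Rightarrow> 'a \<Rightarrow> 'a) \<Rightarrow> 'a \<Rightarrow> 'a \<Rightarrow> (nat \<Rightarrow> 'a option) \<Rightarrow> nat \<Rightarrow> 'a" where
  "lam f x y zs n = fst (lamrho f x y zs n)"

definition rho :: "('a \<Rightarrow> 'a \<Rightarrow> 'a) \<Rightarrow> 'a \<Rightarrow> 'a \<Rightarrow> (nat \<Rightarrow> 'a option) \<Rightarrow> nat \<Rightarrow> 'a" where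
  "rho f x y zs n = snd (lamrho f x y zs n)"

definition malcev_nilpotent :: "'a set \<Rightarrow> ('a \<Rightarrow> 'a \<Rightarrow> 'a) \<Rightarrow> bool" where
  "malcev_nilpotent S f \<longleftrightarrow>
     (\<exists>n>0. \<forall>a\<in>S. \<forall>b\<in>S. \<forall>cs. (\<forall>i\<in>{1..n}. cs i \<in> one_ext S) \<longrightarrow>
        lam f a b cs n = rho f a b cs n)"

inductive_set gen :: "('a \<Rightarrow> 'a \<Rightarrow> 'a) \<Rightarrow> 'a set \<Rightarrow> 'a set" for f X where
  base: "x \<in> X \<Longrightarrow> x \<in> gen f X"
| mult: "a \<in> gen f X \<Longrightarrow> b \<in> gen f X \<Longrightarrow> f a b \<in> gen f X"

definition nn_edge :: "'a set \<Rightarrow> ('a \<Rightarrow> 'a \<Rightarrow> 'a) \<Rightarrow> 'a \<Rightarrow> 'a \<Rightarrow> bool" where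
  "nn_edge S f x y \<longleftrightarrow> x \<in> S \<and> y \<in> S \<and> \<not> malcev_nilpotent (gen f {x, y}) f"

text \<open>(Possibly empty) two-sided ideal I of (T, f).\<close>
definition sg_ideal :: "'a set \<Rightarrow> ('a \<Rightarrow> 'a \<Rightarrow> 'a) \<Rightarrow> 'a set \<Rightarrow> bool" where
  "sg_ideal T f I \<longleftrightarrow> I \<subseteq> T \<and> (\<forall>x\<in>I. \<forall>t\<in>T. f x t \<in> I \<and> f t x \<in> I)"

text \<open>Rees factor T/I, realised on the same type: all of I is collapsed onto
  a chosen representative of I (the zero); for I empty nothing changes.\<close>
definition rees_img :: "'a set \<Rightarrow> 'a \<Rightarrow> 'a" where
  "rees_img I x = (if x \<in> I then (SOME z. z \<in> I) else x)"

definition rees_carrier :: "'a set \<Rightarrow> 'a set \<Rightarrow> 'a set" where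
  "rees_carrier T I = rees_img I ` T"

definition rees_op :: "('a \<Rightarrow> 'a \<Rightarrow> 'a) \<Rightarrow> 'a set \<Rightarrow> 'a \<Rightarrow> 'a \<Rightarrow> 'a" where
  "rees_op f I x y = rees_img I (f x y)"

definition pseudo_nilpotent :: "'a set \<Rightarrow> ('a \<Rightarrow> 'a \<Rightarrow> 'a) \<Rightarrow> bool" where
  "pseudo_nilpotent S f \<longleftrightarrow>
    (\<forall>x\<in>S. \<forall>y\<in>S. \<forall>(ws :: nat \<Rightarrow> 'a option). \<forall>m t :: nat. \<forall>I.
      let T = gen f ({x, y} \<union> {w. \<exists>i\<in>{1..m}. ws i = Some w}) in
      (\<forall>i\<in>{1..m}. ws i \<in> one_ext S) \<longrightarrow> sg_ideal T f I \<longrightarrow> t < m \<longrightarrow>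
      lam f x y ws t \<noteq> rho f x y ws t \<longrightarrow>
      lam f x y ws t = lam f x y ws m \<longrightarrow> rho f x y ws t = rho f x y ws m \<longrightarrow>
      lam f x y ws m \<notin> I \<longrightarrow> rho f x y ws m \<notin> I \<longrightarrow>
      (\<forall>i\<le>m. nn_edge (rees_carrier T I) (rees_op f I)
                 (rees_img I (lam f x y ws i)) (rees_img I (rho f x y ws i))))"

end

theory Submission
  imports Defs
begin

text \<open>If \<open>S\<close> is not nilpotent, then for \<open>n = |S \<times> S|\<close> some sequence has
  \<open>\<lambda>\<^sub>n \<noteq> \<rho>\<^sub>n\<close>. Since equality of \<open>\<lambda>\<^sub>k\<close> and \<open>\<rho>\<^sub>k\<close> persists, \<open>\<lambda>\<^sub>k \<noteq> \<rho>\<^sub>k\<close> for all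
  \<open>k \<le> n\<close>, and by the pigeonhole principle the pair \<open>(\<lambda>\<^sub>k, \<rho>\<^sub>k)\<close> repeats
  at some \<open>t < m \<le> n\<close>. Pseudo-nilpotency with the empty ideal then yields an
  edge between \<open>\<lambda>\<^sub>0 = x\<close> and \<open>\<rho>\<^sub>0 = y\<close> in the non-nilpotent graph of \<open>S\<close>.\<close>

lemma lam_eq_rho_mono:
  assumes "lam f x y zs k = rho f x y zs k" "k \<le> n"
  shows "lam f x y zs n = rho f x y zs n"
  using assms(2,1)
proof (induction n rule: dec_induct)
  case base
  then show ?case by simp
next
  case (step n)
  then show ?case
    by (cases "lamrho f x y zs n") (simp add: lam_def rho_def mult1_def split: option.splits)
qed

lemma finite_range_repeats:
  assumes "finite A" "\<And>k. g k \<in> A"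
  obtains t m where "t < m" "m \<le> card A" "g t = g m"
proof -
  have "card (g ` {0..card A}) < card {0..card A}"
    using assms by (simp add: card_mono image_subset_iff le_imp_less_Suc)
  then have "\<not> inj_on g {0..card A}"
    using pigeonhole by blast
  then obtain i j where "i \<le> card A" "j \<le> card A" "i \<noteq> j" "g i = g j"
    unfolding inj_on_def by auto
  then show thesis
    using that by (cases "i < j") (auto simp: neq_iff)
qed

lemma one_ext_UNIV: "one_ext UNIV = UNIV"
  by (auto simp: one_ext_def intro: option.exhaust)

lemma rees_img_empty: "rees_img {} = id"
  by (rule ext) (simp add: rees_img_def)

lemma rees_op_empty: "rees_op f {} = f"
  by (intro ext) (simp add: rees_op_def rees_img_empty)

lemma pseudo_nilpotent_cycle_not_nilpotent:
  assumes "pseudo_nilpotent S f" "x \<in> S" "y \<in> S"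
    and "\<forall>i\<in>{1..m}. ws i \<in> one_ext S" "t < m"
    and "lam f x y ws t \<noteq> rho f x y ws t"
    and "lamrho f x y ws t = lamrho f x y ws m"
  shows "\<not> malcev_nilpotent (gen f {x, y}) f"
proof -
  let ?T = "gen f ({x, y} \<union> {w. \<exists>i\<in>{1..m}. ws i = Some w})"
  have "sg_ideal ?T f {}"
    by (simp add: sg_ideal_def)
  moreover have "lam f x y ws t = lam f x y ws m" "rho f x y ws t = rho f x y ws m"
    using assms(7) by (simp_all add: lam_def rho_def)
  ultimately have "nn_edge (rees_carrier ?T {}) (rees_op f {})
      (rees_img {} (lam f x y ws 0)) (rees_img {} (rho f x y ws 0))"
    using assms(1-6) unfolding pseudo_nilpotent_def Let_def by blast
  then show ?thesis
    by (simp add: nn_edge_def rees_img_empty rees_op_empty lam_def rho_def)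
qed

theorem lemma2p4:
  fixes S :: "'a :: semigroup_mult set"
  assumes "S = (UNIV :: 'a set)"
    and "finite S"
    and "pseudo_nilpotent S (*)"
    and "\<forall>x\<in>S. \<forall>y\<in>S. \<not> nn_edge S (*) x y"
  shows "malcev_nilpotent S (*)"
proof (rule ccontr)
  assume "\<not> malcev_nilpotent S (*)"
  define n where "n = card (S \<times> S)"
  have fin: "finite (S \<times> S)"
    using assms(2) by simp
  moreover have "S \<times> S \<noteq> {}"
    using assms(1) by simp
  ultimately have "n > 0"
    by (simp add: n_def card_gt_0_iff)
  with \<open>\<not> malcev_nilpotent S (*)\<close> obtain a b cs where ab: "a \<in> S" "b \<in> S"
    and differ: "lam (*) a b cs n \<noteq> rho (*) a b cs n"
    unfolding malcev_nilpotent_def by blast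
  have differ_before: "lam (*) a b cs k \<noteq> rho (*) a b cs k" if "k \<le> n" for k
    using lam_eq_rho_mono[of "(*)" a b cs k n] that differ by blast
  obtain t m where "t < m" "m \<le> n"
    and repeat: "lamrho (*) a b cs t = lamrho (*) a b cs m"
    unfolding n_def by (rule finite_range_repeats[OF fin]) (auto simp: assms(1))
  moreover have "\<forall>i\<in>{1..m}. cs i \<in> one_ext S"
    using assms(1) by (simp add: one_ext_UNIV)
  ultimately have "\<not> malcev_nilpotent (gen (*) {a, b}) (*)"
    using pseudo_nilpotent_cycle_not_nilpotent[OF assms(3) ab] differ_before by simp
  then show False
    using assms(4) ab by (simp add: nn_edge_def)
qed

end
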